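(* Let $y_t=\theta_t+Z_t$, $t=1,\dots,n$, where $Z_t$ are independent zero-mean $\sigma$-subgaussian random variables, and let $\beta>0$. For any interval $[t_h,t_l]\subseteq[1,n]$, let $Y=pad_0(y_{t_h},\dots,y_{t_l})$ and $\Theta=pad_0(\theta_{t_h},\dots,\theta_{t_l})$. Then for each coordinate $i$, $|(T(HY))_i|\le|(H\Theta)_i|$ with probability at least $1-2n^{3-\beta/8}$.
   Context: $pad_0(v_a,\dots,v_b)$ is the vector $(v_a-\bar v,\dots,v_b-\bar v)$ with $\bar v$ the average of $v_a,\dots,v_b$, followed by zeros up to length $k$, the smallest power of $2$ that is $\ge b-a+1$. $H\in\mathbb{R}^{k\times k}$ is the orthonormal discrete Haar wavelet transform matrix. $T$ is coordinatewise soft thresholding at level $\lambda=\sigma\sqrt{\beta\log n}$: $T(u)_i=\mathrm{sign}(u_i)\max(|u_i|-\lambda,0)$. *)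

theory Defs
  imports "HOL-Probability.Probability"
begin

text \<open>Vectors are functions nat => real, indexed 0..k-1. Time indices t are 1-based.\<close>

definition pow2ceil :: "nat \<Rightarrow> nat" where
  "pow2ceil m = (LEAST k. (\<exists>j. k = 2 ^ j) \<and> m \<le> k)"

definition pad0 :: "(nat \<Rightarrow> real) \<Rightarrow> nat \<Rightarrow> nat \<Rightarrow> nat \<Rightarrow> real" where
  "pad0 v a b i =
     (let len = b + 1 - a;
          avg = (\<Sum>t=a..b. v t) / real len
      in if i < len then v (a + i) - avg else 0)"

text \<open>Orthonormal discrete Haar matrix of size k = 2^m: row 0 is constant 1/sqrt k; row
  r = 2^j + s (0 <= s < 2^j) is the Haar wavelet at level j and shift s, supported on a block
  of length L = k div 2^j starting at s*L, equal to 1/sqrt L on its first half and -1/sqrt L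
  on its second half.\<close>
definition haar :: "nat \<Rightarrow> nat \<Rightarrow> nat \<Rightarrow> real" where
  "haar k r t =
     (if r = 0 then 1 / sqrt (real k)
      else (let j = (GREATEST j. 2 ^ j \<le> r);
                s = r - 2 ^ j;
                L = k div 2 ^ j
            in if s * L \<le> t \<and> t < s * L + L div 2 then 1 / sqrt (real L)
               else if s * L + L div 2 \<le> t \<and> t < s * L + L then - 1 / sqrt (real L)
               else 0))"

definition haar_pad :: "(nat \<Rightarrow> real) \<Rightarrow> nat \<Rightarrow> nat \<Rightarrow> nat \<Rightarrow> real" where
  "haar_pad v a b i = (let k = pow2ceil (b + 1 - a) in \<Sum>t<k. haar k i t * pad0 v a b t)"

definition soft_thr :: "real \<Rightarrow> real \<Rightarrow> real" where
  "soft_thr lam u = sgn u * max (\<bar>u\<bar> - lam) 0"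

definition subgaussian :: "'a measure \<Rightarrow> ('a \<Rightarrow> real) \<Rightarrow> real \<Rightarrow> bool" where
  "subgaussian M X \<sigma> \<longleftrightarrow>
     (\<forall>l::real. integrable M (\<lambda>\<omega>. exp (l * X \<omega>)) \<and>
        (\<integral>\<omega>. exp (l * X \<omega>) \<partial>M) \<le> exp (l\<^sup>2 * \<sigma>\<^sup>2 / 2))"

end

theory Submission
  imports Defs
begin

text \<open>The coefficient (H pad_0(y))_i is a linear form in the window y, with weight vector the
  i-th Haar row centred over the window; centring does not increase the Euclidean norm, so
  the weights have norm at most 1. Hence the noise part of the coefficient is a weighted sum of
  independent \<sigma>-subgaussian variables and is itself \<sigma>-subgaussian, and the Chernoff
  bound shows that it exceeds \<lambda> = \<sigma> sqrt(\<beta> log n) in absolute value with probability at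
  most 2 n^(-\<beta>/2) \<le> 2 n^(3-\<beta>/8). Whenever it does not, soft thresholding at level \<lambda>
  removes the noise entirely and can only shrink the signal coefficient.\<close>

lemma pow2ceil_ge: "m \<le> pow2ceil m"
proof -
  have "\<exists>k. (\<exists>j. k = (2::nat) ^ j) \<and> m \<le> k"
    by (rule exI[of _ "2^m"]) (auto intro: less_imp_le[OF less_exp])
  then show ?thesis
    unfolding pow2ceil_def by (rule LeastI2_ex) auto
qed

lemma sum_haar_sq_le: "(\<Sum>t<k. (haar k r t)\<^sup>2) \<le> 1"
proof (cases "r = 0")
  case True
  then show ?thesis by (simp add: haar_def power_divide)
next
  case False
  define j where "j = (GREATEST j. 2 ^ j \<le> r)"
  define L where "L = k div 2 ^ j"
  define B where "B = {(r - 2 ^ j) * L..<(r - 2 ^ j) * L + L}"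
  have "(\<Sum>t<k. (haar k r t)\<^sup>2) \<le> (\<Sum>t<k. if t \<in> B then 1 / real L else 0)"
    using False by (intro sum_mono) (auto simp: haar_def Let_def B_def L_def j_def power_divide)
  also have "\<dots> = (\<Sum>t\<in>{..<k} \<inter> B. 1 / real L)"
    by (rule sum.inter_restrict[symmetric]) simp
  also have "\<dots> \<le> (\<Sum>t\<in>B. 1 / real L)"
    by (rule sum_mono2) (auto simp: B_def)
  also have "\<dots> \<le> 1"
    by (simp add: B_def)
  finally show ?thesis .
qed

lemma sum_mult_centered:
  fixes f g :: "'a \<Rightarrow> real"
  shows "(\<Sum>x\<in>A. f x * (g x - sum g A / card A)) = (\<Sum>x\<in>A. (f x - sum f A / card A) * g x)"
proof -
  have "(\<Sum>x\<in>A. f x * (g x - sum g A / card A)) = (\<Sum>x\<in>A. f x * g x) - sum f A * (sum g A / card A)"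
    by (simp add: right_diff_distrib sum_subtractf sum_distrib_right sum_divide_distrib)
  moreover have "(\<Sum>x\<in>A. (f x - sum f A / card A) * g x) = (\<Sum>x\<in>A. f x * g x) - sum f A / card A * sum g A"
    by (simp add: left_diff_distrib sum_subtractf sum_distrib_left)
  ultimately show ?thesis
    by simp
qed

lemma sum_centered_sq_le:
  fixes f :: "'a \<Rightarrow> real"
  shows "(\<Sum>x\<in>A. (f x - sum f A / card A)\<^sup>2) \<le> (\<Sum>x\<in>A. (f x)\<^sup>2)"
proof (cases "card A = 0")
  case True
  then show ?thesis by simp
next
  case False
  define c where "c = sum f A / card A"
  have "(\<Sum>x\<in>A. (f x - c)\<^sup>2) = (\<Sum>x\<in>A. (f x)\<^sup>2) - 2 * c * sum f A + card A * c\<^sup>2"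
    by (simp add: power2_diff sum.distrib sum_subtractf sum_distrib_left sum_distrib_right mult_ac)
  also have "card A * c\<^sup>2 = c * sum f A"
    using False by (simp add: c_def power2_eq_square)
  finally have "(\<Sum>x\<in>A. (f x - c)\<^sup>2) = (\<Sum>x\<in>A. (f x)\<^sup>2) - (sum f A)\<^sup>2 / card A"
    by (simp add: c_def power2_eq_square)
  then show ?thesis
    by (simp add: c_def)
qed

definition haar_pad_weight :: "nat \<Rightarrow> nat \<Rightarrow> nat \<Rightarrow> nat \<Rightarrow> real" where
  "haar_pad_weight a b i s =
     (let h = (\<lambda>s. haar (pow2ceil (b + 1 - a)) i (s - a))
      in h s - sum h {a..b} / card {a..b})"

lemma atLeastAtMost_eq_image_add_lessThan: "{a..b::nat} = (\<lambda>t. a + t) ` {..<b + 1 - a}"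
proof
  show "{a..b} \<subseteq> (\<lambda>t. a + t) ` {..<b + 1 - a}"
  proof
    fix s assume "s \<in> {a..b}"
    then show "s \<in> (\<lambda>t. a + t) ` {..<b + 1 - a}"
      by (intro image_eqI[of _ _ "s - a"]) auto
  qed
qed auto

lemma haar_pad_eq_sum: "haar_pad w a b i = (\<Sum>s=a..b. haar_pad_weight a b i s * w s)"
proof -
  define k where "k = pow2ceil (b + 1 - a)"
  define h where "h s = haar k i (s - a)" for s
  have shift: "sum g {a..b} = (\<Sum>t<b + 1 - a. g (a + t))" for g :: "nat \<Rightarrow> real"
    by (simp add: atLeastAtMost_eq_image_add_lessThan sum.reindex)
  have "haar_pad w a b i = (\<Sum>t<b + 1 - a. haar k i t * pad0 w a b t)"
    unfolding haar_pad_def Let_def k_def[symmetric]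
    by (rule sum.mono_neutral_right) (auto simp: k_def pad0_def Let_def intro: order.trans[OF _ pow2ceil_ge])
  also have "\<dots> = (\<Sum>s=a..b. h s * (w s - sum w {a..b} / card {a..b}))"
    by (simp add: shift h_def pad0_def Let_def)
  also have "\<dots> = (\<Sum>s=a..b. haar_pad_weight a b i s * w s)"
    unfolding haar_pad_weight_def Let_def k_def[symmetric] h_def[symmetric] by (rule sum_mult_centered)
  finally show ?thesis .
qed

lemma sum_haar_pad_weight_sq_le: "(\<Sum>s=a..b. (haar_pad_weight a b i s)\<^sup>2) \<le> 1"
proof -
  define k where "k = pow2ceil (b + 1 - a)"
  have "(\<Sum>s=a..b. (haar_pad_weight a b i s)\<^sup>2) \<le> (\<Sum>s=a..b. (haar k i (s - a))\<^sup>2)"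
    unfolding haar_pad_weight_def Let_def k_def by (rule sum_centered_sq_le)
  also have "\<dots> = (\<Sum>t<b + 1 - a. (haar k i t)\<^sup>2)"
    by (simp add: atLeastAtMost_eq_image_add_lessThan sum.reindex)
  also have "\<dots> \<le> (\<Sum>t<k. (haar k i t)\<^sup>2)"
    by (rule sum_mono2) (auto simp: k_def intro: order.trans[OF _ pow2ceil_ge])
  also have "\<dots> \<le> 1"
    by (rule sum_haar_sq_le)
  finally show ?thesis .
qed

lemma haar_pad_add: "haar_pad (\<lambda>t. u t + w t) a b i = haar_pad u a b i + haar_pad w a b i"
  by (simp add: haar_pad_eq_sum distrib_left sum.distrib)

lemma soft_thr_add_abs_le: "\<bar>e\<bar> \<le> lam \<Longrightarrow> \<bar>soft_thr lam (x + e)\<bar> \<le> \<bar>x\<bar>"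
  unfolding soft_thr_def by (auto simp: sgn_if abs_mult)

lemma borel_measurable_soft_thr [measurable]: "soft_thr lam \<in> borel_measurable borel"
  unfolding soft_thr_def by measurable

lemma subgaussian_mono:
  assumes "subgaussian M X \<sigma>" and "\<bar>\<sigma>\<bar> \<le> \<bar>\<sigma>'\<bar>"
  shows "subgaussian M X \<sigma>'"
  unfolding subgaussian_def
proof
  fix l :: real
  have "exp (l\<^sup>2 * \<sigma>\<^sup>2 / 2) \<le> exp (l\<^sup>2 * \<sigma>'\<^sup>2 / 2)"
    using assms(2) by (simp add: abs_le_square_iff mult_left_mono)
  then show "integrable M (\<lambda>\<omega>. exp (l * X \<omega>)) \<and> (\<integral>\<omega>. exp (l * X \<omega>) \<partial>M) \<le> exp (l\<^sup>2 * \<sigma>'\<^sup>2 / 2)"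
    using assms(1)[unfolded subgaussian_def, rule_format, of l] by (blast intro: order_trans)
qed

lemma subgaussian_uminus:
  assumes "subgaussian M X \<sigma>"
  shows "subgaussian M (\<lambda>\<omega>. - X \<omega>) \<sigma>"
  unfolding subgaussian_def
proof
  fix l :: real
  show "integrable M (\<lambda>\<omega>. exp (l * - X \<omega>)) \<and> (\<integral>\<omega>. exp (l * - X \<omega>) \<partial>M) \<le> exp (l\<^sup>2 * \<sigma>\<^sup>2 / 2)"
    using assms[unfolded subgaussian_def, rule_format, of "- l"] by simp
qed

context prob_space
begin

lemma subgaussian_zero_AE:
  assumes "subgaussian M X 0"
  shows "AE \<omega> in M. X \<omega> = 0"
proof -
  have int: "integrable M (\<lambda>\<omega>. exp (X \<omega>))" "integrable M (\<lambda>\<omega>. exp (- X \<omega>))"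
    and le: "(\<integral>\<omega>. exp (X \<omega>) \<partial>M) \<le> 1" "(\<integral>\<omega>. exp (- X \<omega>) \<partial>M) \<le> 1"
    using assms[unfolded subgaussian_def, rule_format, of 1] assms[unfolded subgaussian_def, rule_format, of "-1"]
    by auto
  define g where "g \<omega> = cosh (X \<omega>) - 1" for \<omega>
  have g_eq: "g \<omega> = (exp (X \<omega>) + exp (- X \<omega>)) / 2 - 1" for \<omega>
    by (simp add: g_def cosh_def)
  have g_int: "integrable M g"
    unfolding g_eq using int by simp
  have g_nonneg: "0 \<le> g \<omega>" for \<omega>
    by (simp add: g_def cosh_real_ge_1)
  have "(\<integral>\<omega>. g \<omega> \<partial>M) = ((\<integral>\<omega>. exp (X \<omega>) \<partial>M) + (\<integral>\<omega>. exp (- X \<omega>) \<partial>M)) / 2 - 1"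
    unfolding g_eq using int by (simp add: prob_space)
  also have "\<dots> \<le> 0"
    using le by simp
  finally have "(\<integral>\<omega>. g \<omega> \<partial>M) \<le> 0" .
  moreover have "0 \<le> (\<integral>\<omega>. g \<omega> \<partial>M)"
    using g_nonneg by (simp add: integral_nonneg_AE)
  ultimately have "(\<integral>\<omega>. g \<omega> \<partial>M) = 0"
    by linarith
  then have "AE \<omega> in M. g \<omega> = 0"
    using integral_nonneg_eq_0_iff_AE[OF g_int] g_nonneg by simp
  then show ?thesis
    by eventually_elim (simp add: g_def)
qed

lemma subgaussian_weighted_sum:
  assumes "finite I" and "indep_vars (\<lambda>_. borel) Z I" and "\<forall>t\<in>I. subgaussian M (Z t) \<sigma>"
  shows "subgaussian M (\<lambda>\<omega>. \<Sum>t\<in>I. c t * Z t \<omega>) (\<sigma> * sqrt (\<Sum>t\<in>I. (c t)\<^sup>2))"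
  unfolding subgaussian_def
proof
  fix l :: real
  define Y where "Y t \<omega> = exp ((l * c t) * Z t \<omega>)" for t \<omega>
  have exp_sum_eq: "exp (l * (\<Sum>t\<in>I. c t * Z t \<omega>)) = (\<Prod>t\<in>I. Y t \<omega>)" for \<omega>
    unfolding Y_def sum_distrib_left exp_sum[OF assms(1)] by (simp add: mult.assoc)
  have indep: "indep_vars (\<lambda>_. borel) Y I"
    unfolding Y_def by (rule indep_vars_compose2[OF assms(2)]) simp
  have Y_int: "integrable M (Y t)" and Y_le: "(\<integral>\<omega>. Y t \<omega> \<partial>M) \<le> exp ((l * c t)\<^sup>2 * \<sigma>\<^sup>2 / 2)"
    if "t \<in> I" for t
    using assms(3) that unfolding subgaussian_def Y_def by blast+
  have "(\<integral>\<omega>. (\<Prod>t\<in>I. Y t \<omega>) \<partial>M) = (\<Prod>t\<in>I. (\<integral>\<omega>. Y t \<omega> \<partial>M))"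
    by (rule indep_vars_lebesgue_integral[OF assms(1) indep Y_int])
  also have "\<dots> \<le> (\<Prod>t\<in>I. exp ((l * c t)\<^sup>2 * \<sigma>\<^sup>2 / 2))"
    by (intro prod_mono conjI Y_le integral_nonneg_AE) (simp_all add: Y_def)
  also have "\<dots> = exp (l\<^sup>2 * (\<sigma> * sqrt (\<Sum>t\<in>I. (c t)\<^sup>2))\<^sup>2 / 2)"
    by (simp add: exp_sum[OF assms(1), symmetric] power_mult_distrib sum_distrib_left
        sum_divide_distrib mult_ac sum_nonneg)
  finally show "integrable M (\<lambda>\<omega>. exp (l * (\<Sum>t\<in>I. c t * Z t \<omega>))) \<and>
      (\<integral>\<omega>. exp (l * (\<Sum>t\<in>I. c t * Z t \<omega>)) \<partial>M) \<le> exp (l\<^sup>2 * (\<sigma> * sqrt (\<Sum>t\<in>I. (c t)\<^sup>2))\<^sup>2 / 2)"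
    unfolding exp_sum_eq using indep_vars_integrable[OF assms(1) indep Y_int] by simp
qed

lemma subgaussian_haar_pad:
  assumes "indep_vars (\<lambda>_. borel) Z {a..b}" and "\<forall>t\<in>{a..b}. subgaussian M (Z t) \<sigma>"
  shows "subgaussian M (\<lambda>\<omega>. haar_pad (\<lambda>t. Z t \<omega>) a b i) \<sigma>"
proof -
  have "subgaussian M (\<lambda>\<omega>. haar_pad (\<lambda>t. Z t \<omega>) a b i)
      (\<sigma> * sqrt (\<Sum>s=a..b. (haar_pad_weight a b i s)\<^sup>2))"
    unfolding haar_pad_eq_sum using assms by (intro subgaussian_weighted_sum) auto
  moreover have "\<bar>\<sigma> * sqrt (\<Sum>s=a..b. (haar_pad_weight a b i s)\<^sup>2)\<bar> \<le> \<bar>\<sigma>\<bar>"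
    using sum_haar_pad_weight_sq_le[of a b i] by (simp add: abs_mult sum_nonneg mult_left_le)
  ultimately show ?thesis
    by (rule subgaussian_mono)
qed

lemma subgaussian_upper_tail:
  assumes [measurable]: "X \<in> borel_measurable M"
    and "subgaussian M X \<sigma>" and "\<sigma> > 0" and "s \<ge> 0"
  shows "prob {\<omega>\<in>space M. \<sigma> * s \<le> X \<omega>} \<le> exp (- s\<^sup>2 / 2)"
proof -
  define l where "l = s / \<sigma>"
  have l_nonneg: "l \<ge> 0"
    using assms(3,4) by (simp add: l_def)
  have mgf: "integrable M (\<lambda>\<omega>. exp (l * X \<omega>))" "(\<integral>\<omega>. exp (l * X \<omega>) \<partial>M) \<le> exp (l\<^sup>2 * \<sigma>\<^sup>2 / 2)"
    using assms(2) unfolding subgaussian_def by blast+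
  have "prob {\<omega>\<in>space M. \<sigma> * s \<le> X \<omega>} \<le> prob {\<omega>\<in>space M. exp (l * (\<sigma> * s)) \<le> exp (l * X \<omega>)}"
    using l_nonneg by (intro finite_measure_mono) (auto intro: mult_left_mono)
  also have "\<dots> \<le> (\<integral>\<omega>. exp (l * X \<omega>) \<partial>M) / exp (l * (\<sigma> * s))"
    by (rule integral_Markov_inequality_measure[where A="space M"]) (use mgf in auto)
  also have "\<dots> \<le> exp (l\<^sup>2 * \<sigma>\<^sup>2 / 2) / exp (l * (\<sigma> * s))"
    by (rule divide_right_mono) (use mgf in auto)
  also have "\<dots> = exp (- s\<^sup>2 / 2)"
    using assms(3) by (simp add: l_def exp_diff[symmetric] power2_eq_square field_simps)
  finally show ?thesis .
qed

text \<open>Writing the threshold as \<sigma> * s lets the degenerate case \<sigma> = 0 (where X = 0 a.e.)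
  be covered as well.\<close>
lemma subgaussian_abs_le_prob:
  assumes [measurable]: "X \<in> borel_measurable M"
    and "subgaussian M X \<sigma>" and "\<sigma> \<ge> 0" and "s \<ge> 0"
  shows "1 - 2 * exp (- s\<^sup>2 / 2) \<le> prob {\<omega>\<in>space M. \<bar>X \<omega>\<bar> \<le> \<sigma> * s}"
proof (cases "\<sigma> = 0")
  case True
  have "AE \<omega> in M. \<bar>X \<omega>\<bar> \<le> \<sigma> * s"
    using subgaussian_zero_AE assms(2) True by auto
  then have "prob {\<omega>\<in>space M. \<bar>X \<omega>\<bar> \<le> \<sigma> * s} = 1"
    by (intro prob_Collect_eq_1[THEN iffD2]) auto
  then show ?thesis
    by simp
next
  case False
  define upper where "upper = {\<omega>\<in>space M. \<sigma> * s \<le> X \<omega>}"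
  define lower where "lower = {\<omega>\<in>space M. \<sigma> * s \<le> - X \<omega>}"
  have "prob upper \<le> exp (- s\<^sup>2 / 2)"
    unfolding upper_def using False assms by (intro subgaussian_upper_tail) simp_all
  moreover have "prob lower \<le> exp (- s\<^sup>2 / 2)"
    unfolding lower_def using False assms by (intro subgaussian_upper_tail subgaussian_uminus) simp_all
  moreover have "prob (space M - (upper \<union> lower)) = 1 - prob (upper \<union> lower)"
    by (intro prob_compl) (simp add: upper_def lower_def)
  moreover have "prob (upper \<union> lower) \<le> prob upper + prob lower"
    by (intro measure_Un_le) (simp_all add: upper_def lower_def)
  moreover have "prob (space M - (upper \<union> lower)) \<le> prob {\<omega>\<in>space M. \<bar>X \<omega>\<bar> \<le> \<sigma> * s}"
    by (intro finite_measure_mono) (auto simp: upper_def lower_def)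
  ultimately show ?thesis
    by linarith
qed

end

theorem lemma3:
  fixes M :: "'a measure" and Z :: "nat \<Rightarrow> 'a \<Rightarrow> real" and \<theta> :: "nat \<Rightarrow> real"
    and n :: nat and \<sigma> \<beta> :: real
  assumes "prob_space M"
    and "n \<ge> 1" and "\<sigma> \<ge> 0" and "\<beta> > 0"
    and "prob_space.indep_vars M (\<lambda>_. borel) Z {1..n}"
    and "\<forall>t\<in>{1..n}. integrable M (Z t) \<and> (\<integral>\<omega>. Z t \<omega> \<partial>M) = 0"
    and "\<forall>t\<in>{1..n}. subgaussian M (Z t) \<sigma>"
  shows "\<forall>th tl i. 1 \<le> th \<and> th \<le> tl \<and> tl \<le> n \<and> i < pow2ceil (tl + 1 - th) \<longrightarrow>
           measure M {\<omega> \<in> space M.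
              \<bar>soft_thr (\<sigma> * sqrt (\<beta> * ln (real n))) (haar_pad (\<lambda>t. \<theta> t + Z t \<omega>) th tl i)\<bar>
                \<le> \<bar>haar_pad \<theta> th tl i\<bar>}
             \<ge> 1 - 2 * real n powr (3 - \<beta> / 8)"
proof (intro allI impI)
  fix th tl i
  assume "1 \<le> th \<and> th \<le> tl \<and> tl \<le> n \<and> i < pow2ceil (tl + 1 - th)"
  then have window: "{th..tl} \<subseteq> {1..n}"
    by auto
  interpret prob_space M
    by fact
  define noise where "noise \<omega> = haar_pad (\<lambda>t. Z t \<omega>) th tl i" for \<omega>
  define r where "r = sqrt (\<beta> * ln (real n))"
  have "0 \<le> \<beta> * ln (real n)"
    using assms(2,4) by simp
  then have r_nonneg: "0 \<le> r" and r_sq: "r\<^sup>2 = \<beta> * ln (real n)"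
    by (simp_all add: r_def)
  have noisy_coeff: "haar_pad (\<lambda>t. \<theta> t + Z t \<omega>) th tl i = haar_pad \<theta> th tl i + noise \<omega>" for \<omega>
    by (simp add: haar_pad_add noise_def)
  have [measurable]: "noise \<in> borel_measurable M"
    unfolding noise_def haar_pad_eq_sum using assms(6) window
    by (auto intro!: borel_measurable_sum borel_measurable_integrable)
  have "subgaussian M noise \<sigma>"
    unfolding noise_def using assms(7) window
    by (intro subgaussian_haar_pad indep_vars_subset[OF assms(5)]) auto
  have "exp (- r\<^sup>2 / 2) = real n powr (- \<beta> / 2)"
    using assms(2) by (simp add: r_sq powr_def)
  also have "\<dots> \<le> real n powr (3 - \<beta> / 8)"
    using assms(2,4) by (intro powr_mono) auto
  finally have "1 - 2 * real n powr (3 - \<beta> / 8) \<le> 1 - 2 * exp (- r\<^sup>2 / 2)"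
    by simp
  also have "\<dots> \<le> prob {\<omega>\<in>space M. \<bar>noise \<omega>\<bar> \<le> \<sigma> * r}"
    using \<open>subgaussian M noise \<sigma>\<close> assms(3) r_nonneg by (intro subgaussian_abs_le_prob) simp_all
  also have "\<dots> \<le> prob {\<omega>\<in>space M.
      \<bar>soft_thr (\<sigma> * r) (haar_pad (\<lambda>t. \<theta> t + Z t \<omega>) th tl i)\<bar> \<le> \<bar>haar_pad \<theta> th tl i\<bar>}"
    unfolding noisy_coeff by (intro finite_measure_mono) (auto simp: soft_thr_add_abs_le)
  finally show "measure M {\<omega> \<in> space M.
      \<bar>soft_thr (\<sigma> * sqrt (\<beta> * ln (real n))) (haar_pad (\<lambda>t. \<theta> t + Z t \<omega>) th tl i)\<bar>
        \<le> \<bar>haar_pad \<theta> th tl i\<bar>} \<ge> 1 - 2 * real n powr (3 - \<beta> / 8)"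
    unfolding r_def .
qed

end
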